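(* A ring $R$ is NJ-symmetric if and only if the corner ring $eRe$ is NJ-symmetric for every idempotent $e\in R$.
   Context: Rings are associative with identity ($eRe$ has identity $e$). $N(R)$ is the set of nilpotent elements, $J(R)$ the Jacobson radical. $R$ is NJ-symmetric if for all $a,b,c\in R$, $abc\in N(R)$ implies $bac\in J(R)$. *)

theory Defs
  imports "HOL-Algebra.Ideal"
begin

definition nilpotents :: "('a, 'b) ring_scheme \<Rightarrow> 'a set" where
  "nilpotents R = {a \<in> carrier R. \<exists>n::nat. a [^]\<^bsub>R\<^esub> n = \<zero>\<^bsub>R\<^esub>}"

definition left_ideal :: "'a set \<Rightarrow> ('a, 'b) ring_scheme \<Rightarrow> bool" where
  "left_ideal I R \<longleftrightarrow> additive_subgroup I R \<and>
     (\<forall>r\<in>carrier R. \<forall>a\<in>I. r \<otimes>\<^bsub>R\<^esub> a \<in> I)"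

definition maximal_left_ideal :: "'a set \<Rightarrow> ('a, 'b) ring_scheme \<Rightarrow> bool" where
  "maximal_left_ideal I R \<longleftrightarrow> left_ideal I R \<and> I \<noteq> carrier R \<and>
     (\<forall>J. left_ideal J R \<and> I \<subseteq> J \<longrightarrow> J = I \<or> J = carrier R)"

text \<open>Jacobson radical J(R): intersection of all maximal left ideals
  (equal to carrier R when there are none, i.e. for the zero ring).\<close>
definition jacobson_radical :: "('a, 'b) ring_scheme \<Rightarrow> 'a set" where
  "jacobson_radical R = carrier R \<inter> \<Inter>{I. maximal_left_ideal I R}"

definition NJ_symmetric :: "('a, 'b) ring_scheme \<Rightarrow> bool" where
  "NJ_symmetric R \<longleftrightarrow> (\<forall>a\<in>carrier R. \<forall>b\<in>carrier R. \<forall>c\<in>carrier R.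
     a \<otimes>\<^bsub>R\<^esub> b \<otimes>\<^bsub>R\<^esub> c \<in> nilpotents R \<longrightarrow>
     b \<otimes>\<^bsub>R\<^esub> a \<otimes>\<^bsub>R\<^esub> c \<in> jacobson_radical R)"

definition corner :: "('a, 'b) ring_scheme \<Rightarrow> 'a \<Rightarrow> ('a, 'b) ring_scheme" where
  "corner R e = R\<lparr>carrier := {e \<otimes>\<^bsub>R\<^esub> x \<otimes>\<^bsub>R\<^esub> e | x. x \<in> carrier R}, one := e\<rparr>"

end

theory Submission
  imports Defs
begin

(* Taking e = 1 gives one direction, since 1R1 = R. Conversely, let e be idempotent.
   Powers in eRe agree with powers in R, so N(eRe) is contained in N(R), and
   NJ-symmetry of R puts bac into J(R) for a, b, c in eRe with abc nilpotent.
   It remains to see that J(R) meets eRe inside J(eRe). Here we use that x lies in the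
   Jacobson radical iff 1 - rx is left invertible for every r (the forward direction
   needs a maximal left ideal containing R(1 - rx), obtained by Zorn's lemma): if
   u(1 - sx) = 1 with s, x in eRe, then eue is a left inverse of e - sx in eRe. *)

lemma corner_simps [simp]:
  "mult (corner R e) = mult R" "one (corner R e) = e"
  "zero (corner R e) = zero R" "add (corner R e) = add R"
  by (simp_all add: corner_def)

context ring
begin

lemma additive_subgroup_closedI:
  assumes "S \<subseteq> carrier R" "\<zero> \<in> S"
    and "\<And>a b. a \<in> S \<Longrightarrow> b \<in> S \<Longrightarrow> a \<oplus> b \<in> S"
    and "\<And>a. a \<in> S \<Longrightarrow> \<ominus> a \<in> S"
  shows "additive_subgroup S R"
  using assms by (intro additive_subgroupI add.subgroupI) (auto simp: a_inv_def[symmetric])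

lemma ring_with_local_unit:
  assumes S: "additive_subgroup S R"
    and mult_closed: "\<And>x y. x \<in> S \<Longrightarrow> y \<in> S \<Longrightarrow> x \<otimes> y \<in> S"
    and e: "e \<in> S" "\<And>x. x \<in> S \<Longrightarrow> e \<otimes> x = x" "\<And>x. x \<in> S \<Longrightarrow> x \<otimes> e = x"
  shows "ring (R\<lparr>carrier := S, one := e\<rparr>)"
proof -
  have sub: "\<And>x. x \<in> S \<Longrightarrow> x \<in> carrier R"
    using additive_subgroup.a_subset[OF S] by blast
  have "add_monoid (R\<lparr>carrier := S, one := e\<rparr>) = (add_monoid R)\<lparr>carrier := S\<rparr>"
    by simp
  moreover have "group ((add_monoid R)\<lparr>carrier := S\<rparr>)"
    using subgroup.subgroup_is_group[OF additive_subgroup.a_subgroup[OF S] add.is_group] .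
  ultimately interpret S_add: group "add_monoid (R\<lparr>carrier := S, one := e\<rparr>)"
    by simp
  interpret S_mult: monoid "R\<lparr>carrier := S, one := e\<rparr>"
    using sub e mult_closed by unfold_locales (simp_all add: m_assoc)
  show ?thesis
    using sub by unfold_locales (simp_all add: add.m_comm l_distr r_distr)
qed

lemma carrier_corner:
  assumes e: "e \<in> carrier R" "e \<otimes> e = e"
  shows "carrier (corner R e) = {y \<in> carrier R. e \<otimes> y = y \<and> y \<otimes> e = y}"
proof -
  have "e \<otimes> (e \<otimes> x \<otimes> e) = e \<otimes> x \<otimes> e" "e \<otimes> x \<otimes> e \<otimes> e = e \<otimes> x \<otimes> e"
    if "x \<in> carrier R" for x
    using that e by (simp_all add: m_assoc[symmetric]) (simp add: m_assoc)
  then show ?thesis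
    using e unfolding corner_def by auto metis
qed

lemma corner_one: "corner R \<one> = R"
proof -
  have "{\<one> \<otimes> x \<otimes> \<one> | x. x \<in> carrier R} = carrier R"
    by force
  then show ?thesis
    by (simp add: corner_def)
qed

lemma corner_ring:
  assumes e: "e \<in> carrier R" "e \<otimes> e = e"
  shows "ring (corner R e)"
proof -
  have "ring (R\<lparr>carrier := carrier (corner R e), one := e\<rparr>)"
  proof (rule ring_with_local_unit)
    show "additive_subgroup (carrier (corner R e)) R"
      using e by (intro additive_subgroup_closedI)
        (auto simp: carrier_corner l_distr r_distr l_minus r_minus)
    show "x \<otimes> y \<in> carrier (corner R e)"
      if "x \<in> carrier (corner R e)" "y \<in> carrier (corner R e)" for x y
      using that e by (auto simp: carrier_corner m_assoc[symmetric]) (simp add: m_assoc)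
  qed (use e in \<open>simp_all add: carrier_corner\<close>)
  then show ?thesis
    by (simp add: corner_def)
qed

lemma corner_a_inv:
  assumes e: "e \<in> carrier R" "e \<otimes> e = e" and a: "a \<in> carrier (corner R e)"
  shows "\<ominus>\<^bsub>corner R e\<^esub> a = \<ominus> a"
proof -
  interpret C: ring "corner R e"
    using e by (rule corner_ring)
  have "\<ominus> a \<in> carrier (corner R e)"
    using a e by (auto simp: carrier_corner l_minus r_minus)
  moreover have "a \<in> carrier R"
    using a e by (simp add: carrier_corner)
  ultimately show ?thesis
    by (intro C.minus_equality) (simp_all add: a l_neg)
qed

lemma corner_a_minus:
  assumes "e \<in> carrier R" "e \<otimes> e = e" and "b \<in> carrier (corner R e)"
  shows "a \<ominus>\<^bsub>corner R e\<^esub> b = a \<ominus> b"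
  using corner_a_inv[OF assms] by (simp add: a_minus_def)

lemma corner_nat_pow_Suc:
  assumes e: "e \<in> carrier R" "e \<otimes> e = e" and y: "y \<in> carrier (corner R e)"
  shows "y [^]\<^bsub>corner R e\<^esub> Suc n = y [^] Suc n"
proof (induction n)
  case 0
  show ?case
    using y e by (simp add: carrier_corner)
next
  case (Suc n)
  then show ?case
    by (simp del: Group.nat_pow_Suc add: Group.nat_pow_Suc[where n = "Suc n"])
qed

lemma nilpotents_corner_subset:
  assumes e: "e \<in> carrier R" "e \<otimes> e = e"
  shows "nilpotents (corner R e) \<subseteq> nilpotents R"
proof
  fix y assume "y \<in> nilpotents (corner R e)"
  then have y: "y \<in> carrier (corner R e)" and "\<exists>n::nat. y [^]\<^bsub>corner R e\<^esub> n = \<zero>"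
    by (auto simp: nilpotents_def)
  then obtain n :: nat where yn: "y [^]\<^bsub>corner R e\<^esub> n = \<zero>"
    by blast
  have yR: "y \<in> carrier R"
    using y e by (simp add: carrier_corner)
  have "y [^] Suc n = y [^]\<^bsub>corner R e\<^esub> n \<otimes> y"
    using corner_nat_pow_Suc[OF e y, of n] by simp
  also have "\<dots> = \<zero>"
    using yn yR by simp
  finally show "y \<in> nilpotents R"
    using yR unfolding nilpotents_def by blast
qed

lemma left_idealI:
  assumes "I \<subseteq> carrier R" "\<zero> \<in> I"
    and "\<And>a b. a \<in> I \<Longrightarrow> b \<in> I \<Longrightarrow> a \<oplus> b \<in> I"
    and "\<And>a. a \<in> I \<Longrightarrow> \<ominus> a \<in> I"
    and "\<And>r a. r \<in> carrier R \<Longrightarrow> a \<in> I \<Longrightarrow> r \<otimes> a \<in> I"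
  shows "left_ideal I R"
  using assms by (simp add: left_ideal_def additive_subgroup_closedI)

lemma left_ideal_one_imp_carrier:
  assumes "left_ideal I R" "\<one> \<in> I"
  shows "I = carrier R"
proof
  show "I \<subseteq> carrier R"
    using assms(1) additive_subgroup.a_subset by (auto simp: left_ideal_def)
  show "carrier R \<subseteq> I"
    using assms r_one by (metis left_ideal_def subsetI)
qed

lemma left_ideal_add_principal:
  assumes I: "left_ideal I R" and x: "x \<in> carrier R"
  shows "left_ideal {i \<oplus> s \<otimes> x | i s. i \<in> I \<and> s \<in> carrier R} R"
    (is "left_ideal ?K R")
proof -
  interpret I: additive_subgroup I R
    using I by (simp add: left_ideal_def)
  have I_mult: "r \<otimes> i \<in> I" if "r \<in> carrier R" "i \<in> I" for r i
    using I that by (simp add: left_ideal_def)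
  have [simp]: "i \<in> I \<Longrightarrow> i \<in> carrier R" for i
    using I.a_subset by blast
  have K_mem: "i \<oplus> s \<otimes> x \<in> ?K" if "i \<in> I" "s \<in> carrier R" for i s
    using that by blast
  show ?thesis
  proof (rule left_idealI)
    show "?K \<subseteq> carrier R"
      using x by auto
    show "\<zero> \<in> ?K"
      using K_mem[OF I.zero_closed zero_closed] x by simp
  next
    fix a b assume "a \<in> ?K" "b \<in> ?K"
    then obtain i s j t where ab: "a = i \<oplus> s \<otimes> x" "b = j \<oplus> t \<otimes> x"
      and ij: "i \<in> I" "j \<in> I" and st: "s \<in> carrier R" "t \<in> carrier R" by blast
    have "a \<oplus> b = (i \<oplus> j) \<oplus> (s \<oplus> t) \<otimes> x"
      using ab ij st x by (simp add: l_distr a_ac)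
    then show "a \<oplus> b \<in> ?K"
      using K_mem ij st by simp
  next
    fix a assume "a \<in> ?K"
    then obtain i s where a: "a = i \<oplus> s \<otimes> x" and "i \<in> I" "s \<in> carrier R" by blast
    have "\<ominus> a = \<ominus> i \<oplus> (\<ominus> s) \<otimes> x"
      using a \<open>i \<in> I\<close> \<open>s \<in> carrier R\<close> x by (simp add: minus_add l_minus)
    then show "\<ominus> a \<in> ?K"
      using K_mem \<open>i \<in> I\<close> \<open>s \<in> carrier R\<close> by simp
  next
    fix r a assume r: "r \<in> carrier R" and "a \<in> ?K"
    then obtain i s where a: "a = i \<oplus> s \<otimes> x" and "i \<in> I" "s \<in> carrier R" by blast
    have "r \<otimes> a = r \<otimes> i \<oplus> (r \<otimes> s) \<otimes> x"
      using a r \<open>i \<in> I\<close> \<open>s \<in> carrier R\<close> x by (simp add: r_distr m_assoc)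
    then show "r \<otimes> a \<in> ?K"
      using K_mem I_mult r \<open>i \<in> I\<close> \<open>s \<in> carrier R\<close> by simp
  qed
qed

lemma left_ideal_zero: "left_ideal {\<zero>} R"
  by (rule left_idealI) auto

lemma left_ideal_Union_chain:
  assumes "\<C> \<noteq> {}" and ideals: "\<And>I. I \<in> \<C> \<Longrightarrow> left_ideal I R"
    and chain: "\<And>I J. I \<in> \<C> \<Longrightarrow> J \<in> \<C> \<Longrightarrow> I \<subseteq> J \<or> J \<subseteq> I"
  shows "left_ideal (\<Union>\<C>) R"
proof (rule left_idealI)
  have sub: "\<And>I. I \<in> \<C> \<Longrightarrow> additive_subgroup I R"
    using ideals by (simp add: left_ideal_def)
  show "\<Union>\<C> \<subseteq> carrier R"
    using additive_subgroup.a_subset[OF sub] by blast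
  show "\<zero> \<in> \<Union>\<C>"
    using \<open>\<C> \<noteq> {}\<close> additive_subgroup.zero_closed[OF sub] by blast
  show "\<ominus> a \<in> \<Union>\<C>" if "a \<in> \<Union>\<C>" for a
    using that additive_subgroup.a_inv_closed[OF sub] by blast
  show "r \<otimes> a \<in> \<Union>\<C>" if "r \<in> carrier R" "a \<in> \<Union>\<C>" for r a
    using that ideals by (auto simp: left_ideal_def)
  show "a \<oplus> b \<in> \<Union>\<C>" if ab: "a \<in> \<Union>\<C>" "b \<in> \<Union>\<C>" for a b
  proof -
    obtain I J where "I \<in> \<C>" "J \<in> \<C>" "a \<in> I" "b \<in> J"
      using ab by blast
    with chain[of I J] show ?thesis
      using additive_subgroup.a_closed[OF sub] by blast
  qed
qed

lemma exists_maximal_left_ideal: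
  assumes "left_ideal I R" "\<one> \<notin> I"
  shows "\<exists>M. maximal_left_ideal M R \<and> I \<subseteq> M"
proof -
  define \<A> where "\<A> = {J. left_ideal J R \<and> I \<subseteq> J \<and> \<one> \<notin> J}"
  have "\<exists>M\<in>\<A>. \<forall>J\<in>\<A>. M \<subseteq> J \<longrightarrow> J = M"
  proof (rule subset_Zorn_nonempty)
    show "\<A> \<noteq> {}"
      using assms unfolding \<A>_def by blast
    show "\<Union>\<C> \<in> \<A>" if "\<C> \<noteq> {}" and "subset.chain \<A> \<C>" for \<C>
    proof -
      have "\<C> \<subseteq> \<A>" and chain: "\<And>J K. J \<in> \<C> \<Longrightarrow> K \<in> \<C> \<Longrightarrow> J \<subseteq> K \<or> K \<subseteq> J"
        using \<open>subset.chain \<A> \<C>\<close> by (auto simp: subset.chain_def)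
      then have "left_ideal (\<Union>\<C>) R"
        using left_ideal_Union_chain[OF \<open>\<C> \<noteq> {}\<close>] by (auto simp: \<A>_def)
      moreover have "I \<subseteq> \<Union>\<C>" "\<one> \<notin> \<Union>\<C>"
        using \<open>\<C> \<subseteq> \<A>\<close> \<open>\<C> \<noteq> {}\<close> by (auto simp: \<A>_def)
      ultimately show ?thesis
        by (simp add: \<A>_def)
    qed
  qed
  then obtain M where "M \<in> \<A>" and M_maximal_in: "\<forall>J\<in>\<A>. M \<subseteq> J \<longrightarrow> J = M"
    by blast
  then have M: "left_ideal M R" "I \<subseteq> M" "\<one> \<notin> M"
    by (simp_all add: \<A>_def)
  have M_max: "J = M" if "left_ideal J R" "M \<subseteq> J" "\<one> \<notin> J" for J
  proof -
    have "J \<in> \<A>"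
      using that M(2) by (auto simp: \<A>_def)
    then show ?thesis
      using M_maximal_in that(2) by blast
  qed
  have "maximal_left_ideal M R"
    unfolding maximal_left_ideal_def
  proof (intro conjI allI impI)
    show "M \<noteq> carrier R"
      using M(3) by blast
    fix J assume "left_ideal J R \<and> M \<subseteq> J"
    then show "J = M \<or> J = carrier R"
      using M_max left_ideal_one_imp_carrier by blast
  qed (rule M(1))
  with M show ?thesis
    by blast
qed

lemma jacobson_radical_imp_left_invertible:
  assumes x: "x \<in> jacobson_radical R" and r: "r \<in> carrier R"
  shows "\<exists>u\<in>carrier R. u \<otimes> (\<one> \<ominus> r \<otimes> x) = \<one>"
proof (rule ccontr)
  assume no_inverse: "\<not> ?thesis"
  have xR: "x \<in> carrier R"
    using x by (simp add: jacobson_radical_def)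
  define y where "y = \<one> \<ominus> r \<otimes> x"
  have yR: "y \<in> carrier R"
    using xR r by (simp add: y_def)
  let ?L = "{i \<oplus> s \<otimes> y | i s. i \<in> {\<zero>} \<and> s \<in> carrier R}"
  have "\<one> \<notin> ?L"
    using no_inverse yR by (auto simp: y_def)
  then obtain M where M: "maximal_left_ideal M R" "?L \<subseteq> M"
    using exists_maximal_left_ideal left_ideal_add_principal[OF left_ideal_zero yR] by blast
  then have M_ideal: "left_ideal M R" and "M \<noteq> carrier R"
    by (simp_all add: maximal_left_ideal_def)
  have "y \<in> M"
    using M(2) yR by (force intro: exI[of _ \<one>])
  moreover have "r \<otimes> x \<in> M"
    using x M r M_ideal by (auto simp: jacobson_radical_def left_ideal_def)
  ultimately have "y \<oplus> r \<otimes> x \<in> M"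
    using M_ideal additive_subgroup.a_closed by (auto simp: left_ideal_def)
  moreover have "y \<oplus> r \<otimes> x = \<one>"
    using r xR by (simp add: y_def a_minus_def a_assoc l_neg)
  ultimately show False
    using left_ideal_one_imp_carrier[OF M_ideal] \<open>M \<noteq> carrier R\<close> by simp
qed

lemma jacobson_radicalI:
  assumes xR: "x \<in> carrier R"
    and inverse: "\<And>r. r \<in> carrier R \<Longrightarrow> \<exists>u\<in>carrier R. u \<otimes> (\<one> \<ominus> r \<otimes> x) = \<one>"
  shows "x \<in> jacobson_radical R"
proof -
  have "x \<in> M" if "maximal_left_ideal M R" for M
  proof (rule ccontr)
    assume "x \<notin> M"
    have M_ideal: "left_ideal M R" and "M \<noteq> carrier R"
      and M_max: "\<And>J. left_ideal J R \<Longrightarrow> M \<subseteq> J \<Longrightarrow> J = M \<or> J = carrier R"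
      using that by (auto simp: maximal_left_ideal_def)
    have MR: "M \<subseteq> carrier R" and "\<zero> \<in> M"
      using M_ideal additive_subgroup.a_subset additive_subgroup.zero_closed
      by (auto simp: left_ideal_def)
    let ?K = "{i \<oplus> s \<otimes> x | i s. i \<in> M \<and> s \<in> carrier R}"
    have "M \<subseteq> ?K"
      using MR xR by (force intro: exI[of _ \<zero>])
    moreover have "x \<in> ?K"
      using \<open>\<zero> \<in> M\<close> xR by (force intro: exI[of _ \<one>])
    ultimately have "?K = carrier R"
      using M_max left_ideal_add_principal[OF M_ideal xR] \<open>x \<notin> M\<close> by blast
    then obtain m s where m: "m \<in> M" and s: "s \<in> carrier R" and "\<one> = m \<oplus> s \<otimes> x"
      using one_closed by blast
    then have "\<one> \<ominus> s \<otimes> x = m"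
      using MR xR by (auto simp: a_minus_def a_assoc r_neg)
    moreover obtain u where "u \<in> carrier R" "u \<otimes> (\<one> \<ominus> s \<otimes> x) = \<one>"
      using inverse[OF s] by blast
    ultimately have "\<one> \<in> M"
      using m M_ideal by (metis left_ideal_def)
    then show False
      using left_ideal_one_imp_carrier[OF M_ideal] \<open>M \<noteq> carrier R\<close> by simp
  qed
  then show ?thesis
    using xR by (simp add: jacobson_radical_def)
qed

lemma corner_left_inverse:
  assumes e: "e \<in> carrier R" "e \<otimes> e = e" and y: "y \<in> carrier (corner R e)"
    and u: "u \<in> carrier R" "u \<otimes> (\<one> \<ominus> y) = \<one>"
  shows "(e \<otimes> u \<otimes> e) \<otimes> (e \<ominus> y) = e"
proof -
  have yR: "y \<in> carrier R" "e \<otimes> y = y" "y \<otimes> e = y"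
    using y e by (simp_all add: carrier_corner)
  have left_unit: "e \<otimes> (e \<ominus> y) = e \<ominus> y"
    using e yR by (simp add: a_minus_def r_distr r_minus)
  have right_unit: "(\<one> \<ominus> y) \<otimes> e = e \<ominus> y"
    using e yR by (simp add: a_minus_def l_distr l_minus)
  have "(e \<otimes> u \<otimes> e) \<otimes> (e \<ominus> y) = e \<otimes> u \<otimes> (e \<otimes> (e \<ominus> y))"
    using e yR u by (simp add: m_assoc)
  also have "\<dots> = e \<otimes> u \<otimes> ((\<one> \<ominus> y) \<otimes> e)"
    by (simp only: left_unit right_unit)
  also have "\<dots> = e \<otimes> (u \<otimes> (\<one> \<ominus> y)) \<otimes> e"
    using e yR u(1) by (simp add: m_assoc)
  also have "\<dots> = e"
    using e u by simp
  finally show ?thesis .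
qed

lemma jacobson_radical_corner:
  assumes e: "e \<in> carrier R" "e \<otimes> e = e"
  shows "jacobson_radical R \<inter> carrier (corner R e) \<subseteq> jacobson_radical (corner R e)"
proof
  interpret C: ring "corner R e"
    using e by (rule corner_ring)
  fix x assume "x \<in> jacobson_radical R \<inter> carrier (corner R e)"
  then have xJ: "x \<in> jacobson_radical R" and xC: "x \<in> carrier (corner R e)"
    by simp_all
  show "x \<in> jacobson_radical (corner R e)"
  proof (rule C.jacobson_radicalI[OF xC])
    fix s assume s: "s \<in> carrier (corner R e)"
    then have sx: "s \<otimes> x \<in> carrier (corner R e)"
      using C.m_closed[OF s xC] by simp
    obtain u where u: "u \<in> carrier R" "u \<otimes> (\<one> \<ominus> s \<otimes> x) = \<one>"
      using jacobson_radical_imp_left_invertible[OF xJ] s e by (auto simp: carrier_corner)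
    have "e \<otimes> u \<otimes> e \<in> carrier (corner R e)"
      using e u by (simp add: carrier_corner m_assoc[symmetric]) (simp add: m_assoc)
    with corner_left_inverse[OF e sx u]
    show "\<exists>v\<in>carrier (corner R e). v \<otimes>\<^bsub>corner R e\<^esub> (\<one>\<^bsub>corner R e\<^esub> \<ominus>\<^bsub>corner R e\<^esub> s \<otimes>\<^bsub>corner R e\<^esub> x) = \<one>\<^bsub>corner R e\<^esub>"
      using corner_a_minus[OF e sx] by auto
  qed
qed

lemma NJ_symmetric_corner:
  assumes NJ: "NJ_symmetric R" and e: "e \<in> carrier R" "e \<otimes> e = e"
  shows "NJ_symmetric (corner R e)"
  unfolding NJ_symmetric_def corner_simps
proof (intro ballI impI)
  interpret C: ring "corner R e"
    using e by (rule corner_ring)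
  fix a b c
  assume abc: "a \<in> carrier (corner R e)" "b \<in> carrier (corner R e)" "c \<in> carrier (corner R e)"
    and "a \<otimes> b \<otimes> c \<in> nilpotents (corner R e)"
  then have "a \<otimes> b \<otimes> c \<in> nilpotents R"
    using nilpotents_corner_subset[OF e] by blast
  then have "b \<otimes> a \<otimes> c \<in> jacobson_radical R"
    using NJ abc e by (simp add: NJ_symmetric_def carrier_corner)
  moreover have "b \<otimes> a \<otimes> c \<in> carrier (corner R e)"
    using abc C.m_closed by simp
  ultimately show "b \<otimes> a \<otimes> c \<in> jacobson_radical (corner R e)"
    using jacobson_radical_corner[OF e] by blast
qed

end

theorem proposition2p19:
  assumes "ring R"
  shows "NJ_symmetric R \<longleftrightarrow>
    (\<forall>e\<in>carrier R. e \<otimes>\<^bsub>R\<^esub> e = e \<longrightarrow> NJ_symmetric (corner R e))"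
proof -
  interpret ring R
    by fact
  show ?thesis
  proof
    assume "NJ_symmetric R"
    then show "\<forall>e\<in>carrier R. e \<otimes>\<^bsub>R\<^esub> e = e \<longrightarrow> NJ_symmetric (corner R e)"
      using NJ_symmetric_corner by blast
  next
    assume "\<forall>e\<in>carrier R. e \<otimes>\<^bsub>R\<^esub> e = e \<longrightarrow> NJ_symmetric (corner R e)"
    then have "NJ_symmetric (corner R \<one>\<^bsub>R\<^esub>)"
      by simp
    then show "NJ_symmetric R"
      by (simp add: corner_one)
  qed
qed

end
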